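(* Let $r,s\in\mathbb C^\times$ with $r^j=s$ for some integer $j\ge0$, and let $C\in\mathbb C^\times$. Let $f(x,y)=\sum_{i=0}^b g_i(x)y^i\in\mathbb C[x,y]$ be a polynomial of degree $(a,b)$ such that $\deg g_i<o(r)$ for $0\le i\le b$. If $f(rx,\ sCx^j+sy)=r^as^bf(x,y)$, then $f(x,y)$ is a constant multiple of $x^a$.
   Context: The monomial $x^iy^k$ has degree $(i,k)$; degrees are ordered by $(i,k)>(i',k')$ iff $k>k'$, or $k=k'$ and $i>i'$; the degree of a nonzero polynomial is the largest degree of its monomials (so $b$ is the $y$-degree and $a=\deg g_b$). $o(r)$ is the multiplicative order of $r$ ($\infty$ if $r$ is not a root of unity). *)

theory Defs
  imports "HOL-Computational_Algebra.Polynomial" "HOL-Library.Extended_Nat"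
begin

definition mult_order :: "complex \<Rightarrow> enat" where
  "mult_order r = (if \<exists>n>0. r ^ n = 1 then enat (LEAST n. n > 0 \<and> r ^ n = 1) else \<infinity>)"

text \<open>Bivariate polynomials f(x,y) = sum_i g_i(x) y^i are represented as
  complex poly poly: outer variable y, coefficients g_i in C[x].\<close>

text \<open>The substitution f(x,y) |-> f(r x, s C x^j + s y).\<close>
definition subst_map :: "complex \<Rightarrow> complex \<Rightarrow> complex \<Rightarrow> nat \<Rightarrow> complex poly poly \<Rightarrow> complex poly poly" where
  "subst_map r s C j f =
     pcompose (map_poly (\<lambda>g. pcompose g [:0, r:]) f) [: monom (s * C) j, [:s:] :]"

end

theory Submission imports Defs begin

(* Write f = \<Sum>i\<le>b g_i(x) y^i with b = deg_y f, g_b = lead_coeff f, a = deg g_b.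
   Substituting y := sCx^j + sy only mixes y-degrees downwards, so comparing the two
   highest y-coefficients of  f(rx, sCx^j + sy) = r^a s^b f(x,y)  gives:
   (1) y^b:      s^b g_b(rx) = r^a s^b g_b(x), i.e. g_b(rx) = r^a g_b(x).  Since a < o(r),
       no r^k with k < a equals r^a, so g_b is the monomial c x^a.
   (2) y^(b-1):  s^(b-1) g_(b-1)(rx) + b s^b C x^j g_b(rx) = r^a s^b g_(b-1)(x).  If b > 0,
       the coefficient of x^(a+j) cancels on the g_(b-1) side because r^(a+j) = r^a s,
       leaving b s^b C c r^a = 0, which is impossible; hence b = 0.
   The file first collects coefficient formulas for composition with linear polynomials,
   then proves (1) as a statement about univariate polynomials and (2) as a statement
   about subst_map, and finally combines them. *)

lemma coeff_pcompose_dilation: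
  fixes p :: "'a::comm_ring_1 poly"
  shows "coeff (p \<circ>\<^sub>p [:0, r:]) k = r ^ k * coeff p k"
proof (induction p arbitrary: k)
  case (pCons a p)
  show ?case by (cases k) (simp_all add: pcompose_pCons pCons.IH)
qed simp

lemma coeff_pcompose_linear_top:
  fixes p :: "'a::comm_ring_1 poly"
  assumes "degree p \<le> n"
  shows "coeff (p \<circ>\<^sub>p [:A, B:]) n = coeff p n * B ^ n"
  using assms
proof (induction p arbitrary: n)
  case (pCons a p)
  show ?case
  proof (cases n)
    case 0
    with pCons.prems have "p = 0" by (cases "p = 0") auto
    with 0 show ?thesis by (simp add: pcompose_pCons)
  next
    case (Suc m)
    have deg_p: "degree p \<le> m" using pCons.prems Suc by (cases "p = 0") auto
    have "degree (p \<circ>\<^sub>p [:A, B:]) \<le> degree p * degree [:A, B:]"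
      by (rule degree_pcompose_le)
    also have "\<dots> \<le> degree p * 1" by (intro mult_le_mono2) simp
    also have "\<dots> \<le> m" using deg_p by simp
    finally have "coeff (p \<circ>\<^sub>p [:A, B:]) (Suc m) = 0" by (simp add: coeff_eq_0)
    with Suc show ?thesis by (simp add: pcompose_pCons pCons.IH[OF deg_p])
  qed
qed simp

lemma coeff_pcompose_linear_next:
  fixes p :: "'a::comm_ring_1 poly"
  assumes "degree p \<le> Suc n"
  shows "coeff (p \<circ>\<^sub>p [:A, B:]) n
           = coeff p n * B ^ n + of_nat (Suc n) * coeff p (Suc n) * A * B ^ n"
  using assms
proof (induction p arbitrary: n)
  case (pCons a p)
  have deg_p: "degree p \<le> n" using pCons.prems by (cases "p = 0") auto
  show ?case
  proof (cases n)
    case 0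
    then show ?thesis
      using coeff_pcompose_linear_top[OF deg_p, of A B] by (simp add: pcompose_pCons)
  next
    case (Suc m)
    then show ?thesis
      using coeff_pcompose_linear_top[OF deg_p, of A B] pCons.IH[of m] deg_p
      by (simp add: pcompose_pCons algebra_simps)
  qed
qed simp

lemma mult_order_le:
  assumes "0 < n" and "r ^ n = 1"
  shows "mult_order r \<le> enat n"
proof -
  have "(LEAST m. 0 < m \<and> r ^ m = 1) \<le> n" using assms by (intro Least_le) simp
  then show ?thesis using assms unfolding mult_order_def by auto
qed

text \<open>Step (1): a polynomial with g(rx) = r^(deg g) g(x) and deg g < o(r) is a monomial.
  A nonzero coefficient at x^k would force r^k = r^(deg g), i.e. r^(deg g - k) = 1.\<close>
lemma dilation_eigenpoly_is_monomial:
  fixes g :: "complex poly"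
  assumes "r \<noteq> 0"
    and eigen: "g \<circ>\<^sub>p [:0, r:] = smult (r ^ degree g) g"
    and order: "enat (degree g) < mult_order r"
  shows "g = monom (lead_coeff g) (degree g)"
proof (rule poly_eqI)
  fix k
  show "coeff g k = coeff (monom (lead_coeff g) (degree g)) k"
  proof (cases "k = degree g")
    case False
    show ?thesis
    proof (rule ccontr)
      assume "coeff g k \<noteq> coeff (monom (lead_coeff g) (degree g)) k"
      with False have nonzero: "coeff g k \<noteq> 0" by (simp add: coeff_monom)
      then have "k \<le> degree g" by (rule le_degree)
      with False have gap: "0 < degree g - k" by simp
      have "r ^ k * coeff g k = r ^ degree g * coeff g k"
        using arg_cong[OF eigen, of "\<lambda>p. coeff p k"] by (simp add: coeff_pcompose_dilation)
      with nonzero have "r ^ k = r ^ degree g" by simp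
      also have "\<dots> = r ^ k * r ^ (degree g - k)"
        using \<open>k \<le> degree g\<close> by (metis le_add_diff_inverse power_add)
      finally have "r ^ (degree g - k) = 1" using \<open>r \<noteq> 0\<close> by simp
      with gap have "mult_order r \<le> enat (degree g - k)" by (rule mult_order_le)
      also have "\<dots> \<le> enat (degree g)" by simp
      finally show False using order leD by blast
    qed
  qed simp
qed

lemma coeff_subst_map_top:
  "coeff (subst_map r s C j f) (degree f) = smult (s ^ degree f) (lead_coeff f \<circ>\<^sub>p [:0, r:])"
proof -
  have "degree (map_poly (\<lambda>g. g \<circ>\<^sub>p [:0, r:]) f) \<le> degree f"
    by (rule map_poly_degree_leq)
  from coeff_pcompose_linear_top[OF this]
  show ?thesis by (simp add: subst_map_def coeff_map_poly poly_const_pow)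
qed

lemma coeff_subst_map_next:
  assumes "degree f = Suc n"
  shows "coeff (subst_map r s C j f) n
           = smult (s ^ n) (coeff f n \<circ>\<^sub>p [:0, r:])
             + monom (of_nat (Suc n) * s ^ Suc n * C) j * (lead_coeff f \<circ>\<^sub>p [:0, r:])"
proof -
  define G where "G = lead_coeff f \<circ>\<^sub>p [:0, r:]"
  have "degree (map_poly (\<lambda>g. g \<circ>\<^sub>p [:0, r:]) f) \<le> Suc n"
    using map_poly_degree_leq[of _ f] assms by simp
  from coeff_pcompose_linear_next[OF this, of "monom (s * C) j" "[:s:]"]
  have "coeff (subst_map r s C j f) n
          = (coeff f n \<circ>\<^sub>p [:0, r:]) * [:s:] ^ n + of_nat (Suc n) * G * monom (s * C) j * [:s:] ^ n"
    using assms by (simp add: subst_map_def coeff_map_poly G_def)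
  also have "of_nat (Suc n) * G * monom (s * C) j * [:s:] ^ n
               = (monom (of_nat (Suc n)) 0 * monom (s * C) j * monom (s ^ n) 0) * G"
    by (simp only: monom_0 of_nat_poly poly_const_pow mult_ac)
  also have "\<dots> = monom (of_nat (Suc n) * s ^ Suc n * C) j * G"
    by (simp add: mult_monom mult_ac)
  finally show ?thesis by (simp add: poly_const_pow G_def)
qed

text \<open>Step (2): if the leading coefficient is c x^a with c \<noteq> 0 and f satisfies the
  functional equation, then f has y-degree 0; the x^(a+j)-coefficient of the
  y^(b-1)-coefficient of the equation would otherwise give b s^b C c r^a = 0.\<close>
lemma subst_map_eigen_degree_zero:
  assumes "r \<noteq> 0" and "s \<noteq> 0" and "C \<noteq> 0" and "r ^ j = s"
    and lead: "lead_coeff f = monom c a" and "c \<noteq> 0"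
    and eq: "subst_map r s C j f = smult [: r ^ a * s ^ degree f :] f"
  shows "degree f = 0"
proof (rule ccontr)
  assume "degree f \<noteq> 0"
  then obtain n where deg: "degree f = Suc n" by (cases "degree f") auto
  have lead_dilated: "lead_coeff f \<circ>\<^sub>p [:0, r:] = monom (r ^ a * c) a"
    by (rule poly_eqI) (simp add: lead coeff_pcompose_dilation coeff_monom)
  have "coeff (coeff (subst_map r s C j f) n) (a + j)
          = coeff (coeff (smult [: r ^ a * s ^ Suc n :] f) n) (a + j)"
    using eq deg by simp
  then have "s ^ n * r ^ (a + j) * coeff (coeff f n) (a + j) + of_nat (Suc n) * s ^ Suc n * C * r ^ a * c
               = r ^ a * s ^ Suc n * coeff (coeff f n) (a + j)"
    by (simp add: coeff_subst_map_next[OF deg] lead_dilated mult_monom coeff_pcompose_dilation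
        add.commute[of j a] mult_ac)
  moreover have "s ^ n * r ^ (a + j) = r ^ a * s ^ Suc n"
    using \<open>r ^ j = s\<close> by (simp add: power_add mult_ac)
  ultimately have "of_nat (Suc n) * s ^ Suc n * C * r ^ a * c = 0" by simp
  with assms(1-3) \<open>c \<noteq> 0\<close> show False by (simp del: of_nat_Suc)
qed

theorem mainTheorem17:
  fixes r s C :: complex and j :: nat and f :: "complex poly poly"
  assumes "r \<noteq> 0" and "s \<noteq> 0" and "C \<noteq> 0" and "r ^ j = s"
    and "f \<noteq> 0"
    and "\<forall>i \<le> degree f. enat (degree (coeff f i)) < mult_order r"
    and "subst_map r s C j f
           = smult [: r ^ degree (lead_coeff f) * s ^ degree f :] f"
  shows "\<exists>c :: complex. f = [: monom c (degree (lead_coeff f)) :]"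
proof -
  define g where "g = lead_coeff f"
  have eq: "subst_map r s C j f = smult [: r ^ degree g * s ^ degree f :] f"
    using assms(7) by (simp add: g_def)
  have "smult (s ^ degree f) (g \<circ>\<^sub>p [:0, r:]) = coeff (subst_map r s C j f) (degree f)"
    by (simp add: coeff_subst_map_top g_def)
  also have "\<dots> = smult (s ^ degree f) (smult (r ^ degree g) g)"
    by (simp add: eq g_def mult.commute)
  finally have "g \<circ>\<^sub>p [:0, r:] = smult (r ^ degree g) g"
    by (rule smult_cancel[rotated]) (simp add: \<open>s \<noteq> 0\<close>)
  moreover have "enat (degree g) < mult_order r" using assms(6) by (simp add: g_def)
  ultimately have monomial: "g = monom (lead_coeff g) (degree g)"
    by (rule dilation_eigenpoly_is_monomial[OF \<open>r \<noteq> 0\<close>])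
  have "lead_coeff g \<noteq> 0" using \<open>f \<noteq> 0\<close> by (simp add: g_def)
  with subst_map_eigen_degree_zero[OF assms(1-4) monomial[unfolded g_def]] eq
  have "degree f = 0" by (simp add: g_def)
  then have "f = [: g :]" by (simp add: g_def degree_0_id)
  with monomial show ?thesis unfolding g_def by metis
qed

end
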